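(* Fix a node $\ell$ and the other nodes' probabilities $\mathbf{P}_{-\ell}\in[0,1]^{N-1}$, and write $\beta_\ell=e^{-\rho_{\ell2}}\prod_{k\neq\ell}(1-p_k)$. Let $p_\ell(1)\in[p_\ell^{min},1]$ and let $(v_\ell(t))_{t\ge1}$ be random variables such that, with $$p_\ell(t+1)=\max\{p_\ell^{min},\,p_\ell(t)+\kappa(t)v_\ell(t)\},$$ one has for all $t$: $|v_\ell(t)|\le M$ for a constant $M<\infty$, $v_\ell(t)\le 1-p_\ell(t)$, and $$\mathbb{E}\{v_\ell(t)\mid p_\ell(1),\dots,p_\ell(t)\}=e^{-\alpha_\ell p_\ell(t)}-p_\ell(t)\beta_\ell-p_\ell(t).$$ If the deterministic learning rates satisfy $\kappa(t)\in(0,1]$ for all $t$, $\sum_{t}\kappa(t)=\infty$ and $\sum_t\kappa(t)^2<\infty$, then $p_\ell(t)$ converges almost surely to the best response $p_\ell^{br}=\arg\max_{p\in[p_\ell^{min},1]}U_\ell(p;\mathbf{P}_{-\ell})$.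
   Context: Game $\mathcal{G}$: node $\ell$ has parameters $c_\ell>0$, $\rho_{\ell1}>0$, $\rho_{\ell2}>0$, $p_\ell^{min}\in(0,1)$, $\alpha_\ell=c_\ell\rho_{\ell1}$, and virtual utility $$U_\ell(p_\ell;\mathbf{P}_{-\ell})=-\frac{e^{-\alpha_\ell p_\ell}}{\alpha_\ell}-\frac{p_\ell^2}{2}\Big(1+e^{-\rho_{\ell2}}\prod_{k\ne\ell}(1-p_k)\Big)+\frac{1+\alpha_\ell}{\alpha_\ell}.$$ In the paper's learning algorithm, $v_\ell(t)=e^{-\rho_{\ell1}C_\ell^{av}(t)}-\frac{1}{(1+\Delta_\ell^{av}(t))e^{\rho_{\ell2}}}-p_\ell(t)$, where $C_\ell^{av}(t)$ and $\Delta_\ell^{av}(t)$ are node $\ell$'s empirical average transmission cost and empirical time-averaged age over frame $t$; the conditional-expectation hypothesis above is the idealization of this (large frame length) used in the paper. *)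

theory Defs
  imports "HOL-Probability.Probability" "HOL-Probability.Conditional_Expectation"
begin

text \<open>Nodes are indexed by {1..N}; node l is the one under consideration, P k is the
  transmission probability of node k (only k in {1..N} - {l} matters).\<close>

definition beta_coef :: "real \<Rightarrow> nat \<Rightarrow> nat \<Rightarrow> (nat \<Rightarrow> real) \<Rightarrow> real" where
  "beta_coef rho2 N l P = exp (- rho2) * (\<Prod>k\<in>{1..N} - {l}. (1 - P k))"

definition virt_util :: "real \<Rightarrow> real \<Rightarrow> real \<Rightarrow> nat \<Rightarrow> nat \<Rightarrow> (nat \<Rightarrow> real) \<Rightarrow> real \<Rightarrow> real" where
  "virt_util c rho1 rho2 N l P p =
     (let \<alpha> = c * rho1 in
       - exp (- \<alpha> * p) / \<alpha>
       - p\<^sup>2 / 2 * (1 + exp (- rho2) * (\<Prod>k\<in>{1..N} - {l}. (1 - P k)))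
       + (1 + \<alpha>) / \<alpha>)"

definition best_response :: "real \<Rightarrow> real \<Rightarrow> real \<Rightarrow> real \<Rightarrow> nat \<Rightarrow> nat \<Rightarrow> (nat \<Rightarrow> real) \<Rightarrow> real" where
  "best_response c rho1 rho2 pmin N l P =
     (THE p. p \<in> {pmin..1} \<and>
        (\<forall>q\<in>{pmin..1}. virt_util c rho1 rho2 N l P q \<le> virt_util c rho1 rho2 N l P p))"

definition hist_alg :: "'a measure \<Rightarrow> (nat \<Rightarrow> 'a \<Rightarrow> real) \<Rightarrow> nat \<Rightarrow> 'a measure" where
  "hist_alg M p t =
     sigma (space M) (\<Union>s\<in>{1..t}. {p s -` B \<inter> space M | B. B \<in> sets borel})"

end

theory Submission
  imports Defs
begin

text \<open>Write the projected update as p(t+1) = p(t) + kappa(t) s(t) with the effective step s(t).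
  Given the history, the conditional mean of s(t) is at least f(p(t)), where f = U' is the
  strictly decreasing marginal utility, and equals it whenever the projection onto pmin cannot be
  active. The noise s(t) - E[s(t) | history] is a bounded martingale difference sequence, so by
  Kolmogorov's maximal inequality and the summability of kappa(t)^2 the weighted noise series
  converges almost surely. Along such a path the noise is absorbed into a shifted sequence driven
  by the deterministic drift, and since the kappa(t) are not summable this drift pushes p(t) to
  the projected root of f: the point of [pmin, 1] where U' vanishes, or pmin if U'(pmin) \<le> 0.
  By strict concavity of U that point is the best response.\<close>

section \<open>Deterministic recursions with a negative drift\<close>

lemma frequently_lt_of_negative_drift:
  fixes p q g kap :: "nat \<Rightarrow> real" and a \<delta> L :: real
  assumes "\<delta> > 0"
    and kap_pos: "\<And>t. t \<ge> 1 \<Longrightarrow> kap t > 0"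
    and kap_div: "filterlim (\<lambda>n. \<Sum>t=1..n. kap t) at_top sequentially"
    and q_Suc: "\<And>t. t \<ge> 1 \<Longrightarrow> q (Suc t) = q t + kap t * g t"
    and q_ge: "\<And>t. t \<ge> 1 \<Longrightarrow> q t \<ge> L"
    and drift: "eventually (\<lambda>t. p t \<ge> a \<longrightarrow> g t \<le> -\<delta>) sequentially"
  shows "frequently (\<lambda>t. p t < a) sequentially"
  unfolding frequently_def
proof
  assume "eventually (\<lambda>t. \<not> p t < a) sequentially"
  with drift obtain T where T: "T \<ge> 1" "\<And>t. t \<ge> T \<Longrightarrow> g t \<le> -\<delta>"
    unfolding eventually_sequentially by (metis not_less order.trans nat_le_linear)
  have descent: "q (Suc n) \<le> q T - \<delta> * (\<Sum>t=T..n. kap t)" if "n \<ge> T" for n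
    using that
  proof (induction n rule: dec_induct)
    case base
    then show ?case
      using q_Suc[of T] mult_left_mono[OF T(2)[of T] less_imp_le[OF kap_pos[of T]]] T(1)
      by (simp add: algebra_simps)
  next
    case (step n)
    then show ?case
      using q_Suc[of "Suc n"] T(1)
        mult_left_mono[OF T(2)[of "Suc n"] less_imp_le[OF kap_pos[of "Suc n"]]]
      by (simp add: algebra_simps)
  qed
  have "eventually (\<lambda>n. (\<Sum>t=1..n. kap t) \<ge> (\<Sum>t=1..<T. kap t) + (q T - L) / \<delta> + 1) sequentially"
    using kap_div by (simp add: filterlim_at_top)
  then obtain n where n: "n \<ge> T" "(\<Sum>t=1..n. kap t) \<ge> (\<Sum>t=1..<T. kap t) + (q T - L) / \<delta> + 1"
    by (metis eventually_sequentially le_add1 le_add2)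
  have "(\<Sum>t=1..n. kap t) = (\<Sum>t=1..<T. kap t) + (\<Sum>t=T..n. kap t)"
    using n(1) T(1)
    by (metis Suc_le_mono atLeastLessThanSuc_atLeastAtMost le_SucI sum.atLeastLessThan_concat)
  with n(2) have "\<delta> * (\<Sum>t=T..n. kap t) \<ge> \<delta> * ((q T - L) / \<delta> + 1)"
    using \<open>\<delta> > 0\<close> by (intro mult_left_mono) auto
  also have "\<delta> * ((q T - L) / \<delta> + 1) = q T - L + \<delta>"
    using \<open>\<delta> > 0\<close> by (simp add: field_simps)
  finally have "q (Suc n) < L"
    using descent[OF n(1)] \<open>\<delta> > 0\<close> by linarith
  then show False
    using q_ge[of "Suc n"] by simp
qed

lemma excursion_above_bounded:
  fixes p q g kap :: "nat \<Rightarrow> real" and a B \<epsilon> :: real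
  assumes q_Suc: "\<And>t. t \<ge> T \<Longrightarrow> q (Suc t) = q t + kap t * g t"
    and kap_pos: "\<And>t. t \<ge> T \<Longrightarrow> kap t > 0"
    and g_le: "\<And>t. t \<ge> T \<Longrightarrow> g t \<le> B"
    and drift: "\<And>t. t \<ge> T \<Longrightarrow> p t \<ge> a \<Longrightarrow> g t \<le> 0"
    and close: "\<And>t. t \<ge> T \<Longrightarrow> \<bar>q t - p t\<bar> < \<epsilon>/3"
    and small_step: "\<And>t. t \<ge> T \<Longrightarrow> kap t * B < \<epsilon>/3"
    and "T \<le> t0" "p t0 < a" "t0 \<le> s"
  shows "p s \<le> a + \<epsilon>"
proof -
  \<comment> \<open>Above level a the sequence q cannot increase, so since the last visit r below a
    it has risen by at most one step of size kap r * B.\<close>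
  have "p s < a \<or> (\<exists>r. t0 \<le> r \<and> r < s \<and> p r < a \<and> q s \<le> q r + kap r * B)"
    using \<open>t0 \<le> s\<close>
  proof (induction s rule: dec_induct)
    case base
    then show ?case using \<open>p t0 < a\<close> by simp
  next
    case (step s)
    have s: "s \<ge> T" using step(1) \<open>T \<le> t0\<close> by simp
    show ?case
    proof (cases "p s < a")
      case True
      have "kap s * g s \<le> kap s * B"
        using g_le[OF s] kap_pos[OF s] by (intro mult_left_mono) auto
      with True show ?thesis
        using q_Suc[OF s] step(1) by (intro disjI2 exI[of _ s]) auto
    next
      case False
      then have "kap s * g s \<le> 0"
        using drift[OF s] kap_pos[OF s] by (simp add: mult_nonneg_nonpos)
      then show ?thesis
        using step.IH False q_Suc[OF s] by (auto intro: less_SucI)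
    qed
  qed
  then show ?thesis
  proof
    assume "\<exists>r. t0 \<le> r \<and> r < s \<and> p r < a \<and> q s \<le> q r + kap r * B"
    then obtain r where "t0 \<le> r" "r < s" "p r < a" "q s \<le> q r + kap r * B"
      by blast
    moreover have "T \<le> r" "T \<le> s"
      using \<open>T \<le> t0\<close> \<open>t0 \<le> r\<close> \<open>t0 \<le> s\<close> by simp_all
    ultimately show ?thesis
      using close[of s] close[of r] small_step[of r] by linarith
  qed (use close[of t0] \<open>T \<le> t0\<close> in linarith)
qed

lemma eventually_le_of_negative_drift:
  fixes p q g kap :: "nat \<Rightarrow> real" and a B \<delta> L \<epsilon> :: real
  assumes "\<delta> > 0" "\<epsilon> > 0"
    and kap_pos: "\<And>t. t \<ge> 1 \<Longrightarrow> kap t > 0"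
    and kap_lim: "kap \<longlonglongrightarrow> 0"
    and kap_div: "filterlim (\<lambda>n. \<Sum>t=1..n. kap t) at_top sequentially"
    and q_p: "(\<lambda>t. q t - p t) \<longlonglongrightarrow> 0"
    and q_Suc: "\<And>t. t \<ge> 1 \<Longrightarrow> q (Suc t) = q t + kap t * g t"
    and g_le: "\<And>t. t \<ge> 1 \<Longrightarrow> g t \<le> B"
    and drift: "eventually (\<lambda>t. p t \<ge> a \<longrightarrow> g t \<le> -\<delta>) sequentially"
    and p_ge: "\<And>t. t \<ge> 1 \<Longrightarrow> p t \<ge> L"
  shows "eventually (\<lambda>t. p t \<le> a + \<epsilon>) sequentially"
proof -
  have "eventually (\<lambda>t. \<bar>q t - p t\<bar> < \<epsilon>/3) sequentially"
    using tendstoD[OF q_p, of "\<epsilon>/3"] \<open>\<epsilon> > 0\<close> by (simp add: dist_real_def)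
  moreover have "eventually (\<lambda>t. kap t * B < \<epsilon>/3) sequentially"
    using \<open>\<epsilon> > 0\<close> by (intro order_tendstoD(2)[OF tendsto_mult_left_zero[OF kap_lim]]) auto
  ultimately have "eventually (\<lambda>t. t \<ge> 1 \<and> \<bar>q t - p t\<bar> < \<epsilon>/3 \<and> kap t * B < \<epsilon>/3 \<and>
      (p t \<ge> a \<longrightarrow> g t \<le> -\<delta>)) sequentially"
    using drift eventually_ge_at_top[of 1] by eventually_elim auto
  then obtain T where T: "\<And>t. t \<ge> T \<Longrightarrow> t \<ge> 1 \<and>
      \<bar>q t - p t\<bar> < \<epsilon>/3 \<and> kap t * B < \<epsilon>/3 \<and> (p t \<ge> a \<longrightarrow> g t \<le> -\<delta>)"
    unfolding eventually_sequentially by blast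
  obtain K where K: "\<And>t. \<bar>q t - p t\<bar> \<le> K"
    using convergent_imp_Bseq[OF convergentI[OF q_p]] by (auto simp: Bseq_def)
  have "q t \<ge> L - K" if "t \<ge> 1" for t
    using K[of t] p_ge[OF that] by linarith
  then have "frequently (\<lambda>t. p t < a) sequentially"
    using frequently_lt_of_negative_drift[OF \<open>\<delta> > 0\<close> kap_pos kap_div q_Suc] drift by blast
  then obtain t0 where t0: "t0 \<ge> T" "p t0 < a"
    unfolding frequently_sequentially by blast
  have "p s \<le> a + \<epsilon>" if "s \<ge> t0" for s
  proof (rule excursion_above_bounded[where q=q and g=g and kap=kap and B=B and T=T])
    fix t assume "t \<ge> T"
    with T show "q (Suc t) = q t + kap t * g t" "kap t > 0" "g t \<le> B"
      "\<bar>q t - p t\<bar> < \<epsilon>/3" "kap t * B < \<epsilon>/3"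
      using q_Suc kap_pos g_le by auto
    show "g t \<le> 0" if "p t \<ge> a"
      using T[OF \<open>t \<ge> T\<close>] that \<open>\<delta> > 0\<close> by auto
  qed (use t0 that in auto)
  then show ?thesis
    unfolding eventually_sequentially by blast
qed

lemma absorb_convergent_noise:
  fixes p g z kap :: "nat \<Rightarrow> real"
  assumes p_Suc: "\<And>t. t \<ge> 1 \<Longrightarrow> p (Suc t) = p t + kap t * (g t + z t)"
    and "convergent (\<lambda>n. \<Sum>t=1..n. kap t * z t)"
  obtains q where "(\<lambda>t. q t - p t) \<longlonglongrightarrow> 0" "\<And>t. t \<ge> 1 \<Longrightarrow> q (Suc t) = q t + kap t * g t"
proof -
  define S where "S = (\<lambda>n. \<Sum>t=1..n. kap t * z t)"
  obtain Slim where "S \<longlonglongrightarrow> Slim"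
    using \<open>convergent _\<close> unfolding S_def convergent_def by blast
  then have "(\<lambda>t. S (Suc t - 1)) \<longlonglongrightarrow> Slim"
    by simp
  then have "(\<lambda>t. S (t - 1)) \<longlonglongrightarrow> Slim"
    by (rule LIMSEQ_imp_Suc)
  show ?thesis
  proof (rule that[of "\<lambda>t. p t - S (t - 1) + Slim"])
    show "(\<lambda>t. (p t - S (t - 1) + Slim) - p t) \<longlonglongrightarrow> 0"
      using tendsto_diff[OF tendsto_const[of Slim] \<open>(\<lambda>t. S (t - 1)) \<longlonglongrightarrow> Slim\<close>] by simp
    show "p (Suc t) - S (Suc t - 1) + Slim = p t - S (t - 1) + Slim + kap t * g t" if "t \<ge> 1" for t
      using p_Suc[OF that] that unfolding S_def
      by (cases t) (simp_all add: algebra_simps)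
  qed
qed

lemma eventually_le_projected_root:
  fixes p q g kap :: "nat \<Rightarrow> real" and f :: "real \<Rightarrow> real" and pmin Mb ps \<epsilon> :: real
  assumes "\<epsilon> > 0"
    and kap_pos: "\<And>t. t \<ge> 1 \<Longrightarrow> kap t > 0"
    and kap_lim: "kap \<longlonglongrightarrow> 0"
    and kap_div: "filterlim (\<lambda>n. \<Sum>t=1..n. kap t) at_top sequentially"
    and q_p: "(\<lambda>t. q t - p t) \<longlonglongrightarrow> 0"
    and q_Suc: "\<And>t. t \<ge> 1 \<Longrightarrow> q (Suc t) = q t + kap t * g t"
    and p_ge: "\<And>t. t \<ge> 1 \<Longrightarrow> pmin \<le> p t"
    and g_bound: "\<And>t. t \<ge> 1 \<Longrightarrow> \<bar>g t\<bar> \<le> Mb"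
    and g_eq: "\<And>t. t \<ge> 1 \<Longrightarrow> pmin + kap t * Mb < p t \<Longrightarrow> g t = f (p t)"
    and f_anti: "\<And>x y. x < y \<Longrightarrow> f y < f x"
    and "pmin \<le> ps" "f ps \<le> 0"
  shows "eventually (\<lambda>t. p t \<le> ps + \<epsilon>) sequentially"
proof -
  have "- f (ps + \<epsilon>/2) > 0"
    using f_anti[of ps "ps + \<epsilon>/2"] \<open>\<epsilon> > 0\<close> \<open>f ps \<le> 0\<close> by simp
  have g_le: "g t \<le> Mb" if "t \<ge> 1" for t
    using g_bound[OF that] by simp
  have "eventually (\<lambda>t. kap t * Mb < \<epsilon>/2) sequentially"
    using \<open>\<epsilon> > 0\<close> by (intro order_tendstoD(2)[OF tendsto_mult_left_zero[OF kap_lim]]) auto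
  then have drift: "eventually (\<lambda>t. p t \<ge> ps + \<epsilon>/2 \<longrightarrow> g t \<le> - (- f (ps + \<epsilon>/2))) sequentially"
    using eventually_ge_at_top[of 1]
  proof eventually_elim
    case (elim t)
    show ?case
    proof
      assume "p t \<ge> ps + \<epsilon>/2"
      with elim \<open>pmin \<le> ps\<close> have "g t = f (p t)"
        by (intro g_eq) auto
      with \<open>p t \<ge> ps + \<epsilon>/2\<close> show "g t \<le> - (- f (ps + \<epsilon>/2))"
        using f_anti[of "ps + \<epsilon>/2" "p t"] by (cases "p t = ps + \<epsilon>/2") auto
    qed
  qed
  have "eventually (\<lambda>t. p t \<le> ps + \<epsilon>/2 + \<epsilon>/2) sequentially"
    by (rule eventually_le_of_negative_drift[OF \<open>- f (ps + \<epsilon>/2) > 0\<close> _ kap_pos kap_lim kap_div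
          q_p q_Suc g_le drift p_ge]) (use \<open>\<epsilon> > 0\<close> in simp)
  then show ?thesis
    by (rule eventually_mono) simp
qed

lemma eventually_ge_projected_root:
  fixes p q g kap :: "nat \<Rightarrow> real" and f :: "real \<Rightarrow> real" and U Mb ps \<epsilon> :: real
  assumes "\<epsilon> > 0"
    and kap_pos: "\<And>t. t \<ge> 1 \<Longrightarrow> kap t > 0"
    and kap_lim: "kap \<longlonglongrightarrow> 0"
    and kap_div: "filterlim (\<lambda>n. \<Sum>t=1..n. kap t) at_top sequentially"
    and q_p: "(\<lambda>t. q t - p t) \<longlonglongrightarrow> 0"
    and q_Suc: "\<And>t. t \<ge> 1 \<Longrightarrow> q (Suc t) = q t + kap t * g t"
    and p_le: "\<And>t. t \<ge> 1 \<Longrightarrow> p t \<le> U"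
    and g_bound: "\<And>t. t \<ge> 1 \<Longrightarrow> \<bar>g t\<bar> \<le> Mb"
    and g_ge: "\<And>t. t \<ge> 1 \<Longrightarrow> f (p t) \<le> g t"
    and f_anti: "\<And>x y. x < y \<Longrightarrow> f y < f x"
    and "f ps = 0"
  shows "eventually (\<lambda>t. ps - \<epsilon> \<le> p t) sequentially"
proof -
  \<comment> \<open>Reflect everything and reuse the upper bound argument.\<close>
  have "f (ps - \<epsilon>/2) > 0"
    using f_anti[of "ps - \<epsilon>/2" ps] \<open>\<epsilon> > 0\<close> \<open>f ps = 0\<close> by simp
  have neg_q_p: "(\<lambda>t. (- q t) - (- p t)) \<longlonglongrightarrow> 0"
    using tendsto_minus[OF q_p] by simp
  have neg_q_Suc: "- q (Suc t) = - q t + kap t * (- g t)" if "t \<ge> 1" for t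
    using q_Suc[OF that] by simp
  have neg_g_le: "- g t \<le> Mb" if "t \<ge> 1" for t
    using g_bound[OF that] by simp
  have drift: "eventually (\<lambda>t. - p t \<ge> - (ps - \<epsilon>/2) \<longrightarrow> - g t \<le> - f (ps - \<epsilon>/2)) sequentially"
    using eventually_ge_at_top[of 1]
  proof eventually_elim
    case (elim t)
    show ?case
    proof
      assume "- p t \<ge> - (ps - \<epsilon>/2)"
      then have "f (ps - \<epsilon>/2) \<le> f (p t)"
        using f_anti[of "p t" "ps - \<epsilon>/2"] by (cases "p t = ps - \<epsilon>/2") auto
      then show "- g t \<le> - f (ps - \<epsilon>/2)"
        using g_ge[OF elim] by simp
    qed
  qed
  have neg_p_ge: "- U \<le> - p t" if "t \<ge> 1" for t
    using p_le[OF that] by simp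
  have "eventually (\<lambda>t. - p t \<le> - (ps - \<epsilon>/2) + \<epsilon>/2) sequentially"
    by (rule eventually_le_of_negative_drift[OF \<open>f (ps - \<epsilon>/2) > 0\<close> _ kap_pos kap_lim kap_div
          neg_q_p neg_q_Suc neg_g_le drift neg_p_ge]) (use \<open>\<epsilon> > 0\<close> in simp)
  then show ?thesis
    by (rule eventually_mono) simp
qed

lemma projected_recursion_tendsto:
  fixes p g z kap :: "nat \<Rightarrow> real" and f :: "real \<Rightarrow> real" and pmin Mb ps :: real
  assumes kap_pos: "\<And>t. t \<ge> 1 \<Longrightarrow> kap t > 0"
    and kap_lim: "kap \<longlonglongrightarrow> 0"
    and kap_div: "filterlim (\<lambda>n. \<Sum>t=1..n. kap t) at_top sequentially"
    and p_range: "\<And>t. t \<ge> 1 \<Longrightarrow> pmin \<le> p t \<and> p t \<le> 1"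
    and p_Suc: "\<And>t. t \<ge> 1 \<Longrightarrow> p (Suc t) = p t + kap t * (g t + z t)"
    and noise: "convergent (\<lambda>n. \<Sum>t=1..n. kap t * z t)"
    and g_bound: "\<And>t. t \<ge> 1 \<Longrightarrow> \<bar>g t\<bar> \<le> Mb"
    and g_ge: "\<And>t. t \<ge> 1 \<Longrightarrow> f (p t) \<le> g t"
    and g_eq: "\<And>t. t \<ge> 1 \<Longrightarrow> pmin + kap t * Mb < p t \<Longrightarrow> g t = f (p t)"
    and f_anti: "\<And>x y. x < y \<Longrightarrow> f y < f x"
    and ps: "pmin \<le> ps" "f ps \<le> 0" "pmin < ps \<Longrightarrow> f ps = 0"
  shows "p \<longlonglongrightarrow> ps"
proof -
  obtain q where q: "(\<lambda>t. q t - p t) \<longlonglongrightarrow> 0" "\<And>t. t \<ge> 1 \<Longrightarrow> q (Suc t) = q t + kap t * g t"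
    using absorb_convergent_noise[OF p_Suc noise] by blast
  show ?thesis
  proof (rule order_tendstoI)
    fix a assume "a > ps"
    have "eventually (\<lambda>t. p t \<le> ps + (a - ps)/2) sequentially"
      using \<open>a > ps\<close> p_range
      by (intro eventually_le_projected_root[OF _ kap_pos kap_lim kap_div q _ g_bound g_eq f_anti ps(1,2)])
         auto
    then show "eventually (\<lambda>t. p t < a) sequentially"
      by (rule eventually_mono) (use \<open>a > ps\<close> in \<open>simp add: field_simps\<close>)
  next
    fix a assume "a < ps"
    show "eventually (\<lambda>t. a < p t) sequentially"
    proof (cases "pmin < ps")
      case True
      have "eventually (\<lambda>t. ps - (ps - a)/2 \<le> p t) sequentially"
        using \<open>a < ps\<close> p_range ps(3)[OF True]
        by (intro eventually_ge_projected_root[OF _ kap_pos kap_lim kap_div q _ g_bound g_ge f_anti,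
              where U=1]) auto
      then show ?thesis
        by (rule eventually_mono) (use \<open>a < ps\<close> in \<open>simp add: field_simps\<close>)
    next
      case False
      with ps(1) have "pmin = ps"
        by simp
      show ?thesis
        using eventually_ge_at_top[of 1]
        by (rule eventually_mono) (use p_range \<open>a < ps\<close> \<open>pmin = ps\<close> in force)
    qed
  qed
qed

section \<open>The best response as a projected root of the marginal utility\<close>

lemma projected_root_exists:
  fixes f :: "real \<Rightarrow> real"
  assumes "a \<le> b" "continuous_on {a..b} f" "f b \<le> 0"
  shows "\<exists>ps\<in>{a..b}. f ps \<le> 0 \<and> (a < ps \<longrightarrow> f ps = 0)"
proof (cases "f a \<le> 0")
  case True
  then show ?thesis
    using \<open>a \<le> b\<close> by (intro bexI[of _ a]) auto
next
  case False
  then obtain x where "a \<le> x" "x \<le> b" "f x = 0"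
    using IVT2'[of f b 0 a] assms by force
  then show ?thesis
    by (intro bexI[of _ x]) auto
qed

lemma projected_root_strict_max:
  fixes U f :: "real \<Rightarrow> real"
  assumes deriv: "\<And>x. (U has_real_derivative f x) (at x)"
    and f_anti: "\<And>x y. x < y \<Longrightarrow> f y < f x"
    and ps: "a \<le> ps" "f ps \<le> 0" "a < ps \<Longrightarrow> f ps = 0"
    and "a \<le> q" "q \<noteq> ps"
  shows "U q < U ps"
proof (cases "ps < q")
  case True
  then obtain z where "ps < z" "U q - U ps = (q - ps) * f z"
    using MVT2[of ps q U f] deriv by blast
  moreover have "f z < 0"
    using f_anti[OF \<open>ps < z\<close>] ps(2) by simp
  ultimately show ?thesis
    using mult_pos_neg[of "q - ps" "f z"] True by linarith
next
  case False
  with \<open>a \<le> q\<close> \<open>q \<noteq> ps\<close> have "q < ps" "a < ps"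
    by auto
  then obtain z where "z < ps" "U ps - U q = (ps - q) * f z"
    using MVT2[of q ps U f] deriv by blast
  moreover have "f z > 0"
    using f_anti[OF \<open>z < ps\<close>] ps(3)[OF \<open>a < ps\<close>] by simp
  ultimately show ?thesis
    using mult_pos_pos[of "ps - q" "f z"] \<open>q < ps\<close> by linarith
qed

definition marginal_util :: "real \<Rightarrow> real \<Rightarrow> real \<Rightarrow> nat \<Rightarrow> nat \<Rightarrow> (nat \<Rightarrow> real) \<Rightarrow> real \<Rightarrow> real" where
  "marginal_util c rho1 rho2 N l P p = exp (- (c * rho1) * p) - p * beta_coef rho2 N l P - p"

lemma beta_coef_nonneg:
  assumes "\<And>k. k \<in> {1..N} - {l} \<Longrightarrow> P k \<in> {0..1}"
  shows "beta_coef rho2 N l P \<ge> 0"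
  unfolding beta_coef_def using assms by (intro mult_nonneg_nonneg prod_nonneg) auto

lemma has_real_derivative_virt_util:
  assumes "c * rho1 \<noteq> 0"
  shows "(virt_util c rho1 rho2 N l P has_real_derivative marginal_util c rho1 rho2 N l P p) (at p)"
  unfolding virt_util_def marginal_util_def beta_coef_def Let_def
  using assms by (auto intro!: derivative_eq_intros simp: field_simps power2_eq_square)

lemma marginal_util_strict_antimono:
  assumes "c * rho1 > 0" "beta_coef rho2 N l P \<ge> 0" "x < y"
  shows "marginal_util c rho1 rho2 N l P y < marginal_util c rho1 rho2 N l P x"
proof -
  have "exp (- (c * rho1) * y) < exp (- (c * rho1) * x)"
    using assms by (simp add: mult_strict_left_mono)
  moreover have "x * beta_coef rho2 N l P \<le> y * beta_coef rho2 N l P"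
    using assms by (intro mult_right_mono) auto
  ultimately show ?thesis
    unfolding marginal_util_def using \<open>x < y\<close> by linarith
qed

lemma best_response_eqI:
  assumes "ps \<in> {pmin..1}"
    and "\<And>q. q \<in> {pmin..1} \<Longrightarrow> q \<noteq> ps \<Longrightarrow> virt_util c rho1 rho2 N l P q < virt_util c rho1 rho2 N l P ps"
  shows "best_response c rho1 rho2 pmin N l P = ps"
  unfolding best_response_def
  by (rule the_equality) (use assms in \<open>fastforce, meson linorder_not_le\<close>)

lemma best_response_projected_root:
  fixes c rho1 rho2 pmin :: real and N l :: nat and P :: "nat \<Rightarrow> real"
  assumes "c * rho1 > 0" "\<And>k. k \<in> {1..N} - {l} \<Longrightarrow> P k \<in> {0..1}" "pmin \<le> 1"
  defines "br \<equiv> best_response c rho1 rho2 pmin N l P"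
  shows "pmin \<le> br" "marginal_util c rho1 rho2 N l P br \<le> 0"
    "pmin < br \<Longrightarrow> marginal_util c rho1 rho2 N l P br = 0"
proof -
  let ?f = "marginal_util c rho1 rho2 N l P"
  have \<beta>: "beta_coef rho2 N l P \<ge> 0"
    by (rule beta_coef_nonneg) (use assms(2) in auto)
  have cont: "continuous_on {pmin..1} ?f"
    unfolding marginal_util_def by (intro continuous_intros)
  have f1: "?f 1 \<le> 0"
  proof -
    have "exp (- (c * rho1)) \<le> 1"
      using assms(1) by simp
    moreover have "?f 1 = exp (- (c * rho1)) - beta_coef rho2 N l P - 1"
      by (simp add: marginal_util_def)
    ultimately show ?thesis
      using \<beta> by linarith
  qed
  from projected_root_exists[OF \<open>pmin \<le> 1\<close> cont f1]
  obtain ps where "ps \<in> {pmin..1}" "?f ps \<le> 0 \<and> (pmin < ps \<longrightarrow> ?f ps = 0)" ..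
  then have ps: "pmin \<le> ps" "ps \<le> 1" "?f ps \<le> 0" "pmin < ps \<Longrightarrow> ?f ps = 0"
    by auto
  have deriv: "\<And>x. (virt_util c rho1 rho2 N l P has_real_derivative ?f x) (at x)"
    using assms(1) by (intro has_real_derivative_virt_util) auto
  have anti: "\<And>x y. x < y \<Longrightarrow> ?f y < ?f x"
    using assms(1) \<beta> by (rule marginal_util_strict_antimono)
  have "br = ps"
    unfolding br_def
  proof (rule best_response_eqI)
    show "ps \<in> {pmin..1}"
      using ps by simp
    fix q assume "q \<in> {pmin..1}" "q \<noteq> ps"
    then show "virt_util c rho1 rho2 N l P q < virt_util c rho1 rho2 N l P ps"
      using projected_root_strict_max[OF deriv anti ps(1,3,4)] by simp
  qed
  with ps show "pmin \<le> br" "?f br \<le> 0" "pmin < br \<Longrightarrow> ?f br = 0"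
    by auto
qed

section \<open>Almost sure convergence of square-summable martingale difference series\<close>

lemma (in finite_measure) integrable_bounded:
  fixes f :: "'a \<Rightarrow> real"
  assumes "f \<in> borel_measurable M" "\<And>x. x \<in> space M \<Longrightarrow> \<bar>f x\<bar> \<le> B"
  shows "integrable M f"
  using assms by (intro integrable_const_bound[where B = B] AE_I2) auto

lemma indicator_Bex_eq_sum_first:
  fixes P :: "nat \<Rightarrow> 'a \<Rightarrow> bool"
  shows "indicator {x\<in>X. \<exists>k\<in>{m..n}. P k x} x =
    (\<Sum>k\<in>{m..n}. indicator {x\<in>X. P k x \<and> (\<forall>j\<in>{m..<k}. \<not> P j x)} x :: real)"
proof (cases "x \<in> X \<and> (\<exists>k\<in>{m..n}. P k x)")
  case False
  then show ?thesis
    by (auto simp: indicator_def)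
next
  case True
  define k0 where "k0 = (LEAST k. k \<in> {m..n} \<and> P k x)"
  obtain k where "k \<in> {m..n}" "P k x"
    using True by blast
  then have k0: "k0 \<in> {m..n}" "P k0 x"
    using LeastI[of "\<lambda>k. k \<in> {m..n} \<and> P k x" k] unfolding k0_def by auto
  have before_k0: "\<not> P j x" if "j \<in> {m..<k0}" for j
    using not_less_Least[of j "\<lambda>k. k \<in> {m..n} \<and> P k x"] that k0(1) unfolding k0_def by auto
  have "x \<in> {x\<in>X. P k x \<and> (\<forall>j\<in>{m..<k}. \<not> P j x)} \<longleftrightarrow> k = k0" if "k \<in> {m..n}" for k
  proof
    assume "x \<in> {x\<in>X. P k x \<and> (\<forall>j\<in>{m..<k}. \<not> P j x)}"
    then have "\<not> k < k0" "\<not> k0 < k"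
      using before_k0[of k] k0 that by auto
    then show "k = k0"
      by simp
  qed (use True k0 before_k0 in auto)
  then have "(\<Sum>k\<in>{m..n}. indicator {x\<in>X. P k x \<and> (\<forall>j\<in>{m..<k}. \<not> P j x)} x :: real) =
      (\<Sum>k\<in>{m..n}. if k = k0 then 1 else 0)"
    by (intro sum.cong) (auto simp: indicator_def)
  then show ?thesis
    using True k0(1) by simp
qed

text \<open>The orthogonality assumption is the martingale difference property
  E[Z t | F t] = 0, tested against bounded F t-measurable functions.\<close>
locale bounded_martingale_difference = prob_space M for M :: "'a measure" +
  fixes F :: "nat \<Rightarrow> 'a measure" and Z :: "nat \<Rightarrow> 'a \<Rightarrow> real" and b :: "nat \<Rightarrow> real"
  assumes subalgebra_F: "\<And>t. subalgebra M (F t)"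
    and sets_F_mono: "\<And>t s. t \<le> s \<Longrightarrow> sets (F t) \<subseteq> sets (F s)"
    and Z_measurable: "\<And>t. Z t \<in> borel_measurable (F (Suc t))"
    and Z_bounded: "\<And>t x. x \<in> space M \<Longrightarrow> \<bar>Z t x\<bar> \<le> b t"
    and Z_orthogonal: "\<And>t H K. H \<in> borel_measurable (F t) \<Longrightarrow> (\<And>x. x \<in> space M \<Longrightarrow> \<bar>H x\<bar> \<le> K) \<Longrightarrow>
      (\<integral>x. H x * Z t x \<partial>M) = 0"
begin

definition S :: "nat \<Rightarrow> 'a \<Rightarrow> real" where
  "S n x = (\<Sum>t<n. Z t x)"

lemma measurable_F_mono: "f \<in> borel_measurable (F t) \<Longrightarrow> t \<le> s \<Longrightarrow> f \<in> borel_measurable (F s)"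
  by (rule measurable_from_subalg[of "F s" "F t"])
     (use subalgebra_F sets_F_mono in \<open>auto simp: subalgebra_def\<close>)

lemma measurable_F_M: "f \<in> borel_measurable (F t) \<Longrightarrow> f \<in> borel_measurable M"
  by (rule measurable_from_subalg[OF subalgebra_F])

lemma sets_F_M: "A \<in> sets (F t) \<Longrightarrow> A \<in> sets M"
  using subalgebra_F by (auto simp: subalgebra_def)

lemma Z_borel [measurable]: "Z t \<in> borel_measurable M"
  by (rule measurable_F_M[OF Z_measurable])

lemma S_measurable_F: "S n \<in> borel_measurable (F n)"
  unfolding S_def[abs_def] by (intro borel_measurable_sum measurable_F_mono[OF Z_measurable]) auto

lemma S_borel [measurable]: "S n \<in> borel_measurable M"
  by (rule measurable_F_M[OF S_measurable_F])

lemma abs_S_diff_le: "x \<in> space M \<Longrightarrow> \<bar>S n x - S m x\<bar> \<le> (\<Sum>t<n. b t) + (\<Sum>t<m. b t)"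
proof -
  assume x: "x \<in> space M"
  have S_le: "\<bar>S k x\<bar> \<le> (\<Sum>t<k. b t)" for k
    unfolding S_def using Z_bounded[OF x] by (intro order_trans[OF sum_abs] sum_mono) auto
  show ?thesis
    using abs_triangle_ineq4[of "S n x" "S m x"] add_mono[OF S_le[of n] S_le[of m]] by linarith
qed

lemma integrable_sq_bounded:
  fixes f :: "'a \<Rightarrow> real"
  assumes "f \<in> borel_measurable M" "\<And>x. x \<in> space M \<Longrightarrow> \<bar>f x\<bar> \<le> B"
  shows "integrable M (\<lambda>x. (f x)\<^sup>2)"
proof (rule integrable_bounded[where B = "B\<^sup>2"])
  show "\<bar>(f x)\<^sup>2\<bar> \<le> B\<^sup>2" if "x \<in> space M" for x
    using power2_le_iff_abs_le[of B "f x"] assms(2)[OF that] by simp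
qed (use assms in auto)

lemma integrable_sq_S_diff: "integrable M (\<lambda>x. (S n x - S m x)\<^sup>2)"
  by (rule integrable_sq_bounded[OF _ abs_S_diff_le]) auto

lemma integrable_sq_Z: "integrable M (\<lambda>x. (Z t x)\<^sup>2)"
  by (rule integrable_sq_bounded[OF _ Z_bounded]) auto

lemma integral_sq_increment:
  assumes A: "A \<in> sets (F j)" and "m \<le> j"
  shows "(\<integral>x. (S (Suc j) x - S m x)\<^sup>2 * indicator A x \<partial>M) =
    (\<integral>x. (S j x - S m x)\<^sup>2 * indicator A x \<partial>M) + (\<integral>x. (Z j x)\<^sup>2 * indicator A x \<partial>M)"
proof -
  have [measurable]: "A \<in> sets M"
    by (rule sets_F_M[OF A])
  define H where "H x = (S j x - S m x) * indicator A x" for x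
  define K where "K = (\<Sum>t<j. b t) + (\<Sum>t<m. b t)"
  have H_bounded: "\<bar>H x\<bar> \<le> K" if "x \<in> space M" for x
    using abs_S_diff_le[OF that, of j m] unfolding H_def K_def by (auto simp: indicator_def abs_mult)
  have H_measurable: "H \<in> borel_measurable (F j)"
    unfolding H_def[abs_def] using A S_measurable_F measurable_F_mono[OF S_measurable_F \<open>m \<le> j\<close>]
    by (intro borel_measurable_times borel_measurable_diff borel_measurable_indicator) auto
  have cross: "integrable M (\<lambda>x. H x * Z j x)"
  proof (rule integrable_bounded[where B = "K * b j"])
    show "\<bar>H x * Z j x\<bar> \<le> K * b j" if "x \<in> space M" for x
      using mult_mono[OF H_bounded[OF that] Z_bounded[OF that]] H_bounded[OF that]
      by (auto simp: abs_mult)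
  qed (use measurable_F_M[OF H_measurable] in measurable)
  have "(S (Suc j) x - S m x)\<^sup>2 * indicator A x =
      (S j x - S m x)\<^sup>2 * indicator A x + 2 * (H x * Z j x) + (Z j x)\<^sup>2 * indicator A x" for x
    unfolding H_def S_def by (simp add: power2_eq_square algebra_simps indicator_def)
  then have "(\<integral>x. (S (Suc j) x - S m x)\<^sup>2 * indicator A x \<partial>M) =
      (\<integral>x. (S j x - S m x)\<^sup>2 * indicator A x \<partial>M) + 2 * (\<integral>x. H x * Z j x \<partial>M) +
      (\<integral>x. (Z j x)\<^sup>2 * indicator A x \<partial>M)"
    using cross integrable_real_mult_indicator[OF _ integrable_sq_S_diff]
      integrable_real_mult_indicator[OF _ integrable_sq_Z] by simp
  then show ?thesis
    using Z_orthogonal[OF H_measurable H_bounded] by simp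
qed

lemma integral_sq_mono:
  assumes A: "A \<in> sets (F k)" and "m \<le> k" "k \<le> n"
  shows "(\<integral>x. (S k x - S m x)\<^sup>2 * indicator A x \<partial>M) \<le> (\<integral>x. (S n x - S m x)\<^sup>2 * indicator A x \<partial>M)"
  using \<open>k \<le> n\<close>
proof (induction n rule: dec_induct)
  case (step i)
  have "A \<in> sets (F i)"
    using sets_F_mono[OF step(1)] A by auto
  moreover have "0 \<le> (\<integral>x. (Z i x)\<^sup>2 * indicator A x \<partial>M)"
    by (intro Bochner_Integration.integral_nonneg) (simp add: indicator_def)
  ultimately show ?case
    using integral_sq_increment[of A i m] step.IH step(1) \<open>m \<le> k\<close> by linarith
qed simp

lemma integral_sq_le:
  assumes "m \<le> n"
  shows "(\<integral>x. (S n x - S m x)\<^sup>2 \<partial>M) \<le> (\<Sum>t\<in>{m..<n}. (b t)\<^sup>2)"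
proof -
  have space: "space M \<in> sets (F j)" for j
    using subalgebra_F[of j] by (metis sets.top subalgebra_def)
  have "(\<integral>x. (S n x - S m x)\<^sup>2 * indicator (space M) x \<partial>M) \<le> (\<Sum>t\<in>{m..<n}. (b t)\<^sup>2)"
    using assms
  proof (induction n rule: dec_induct)
    case (step i)
    have "(\<integral>x. (Z i x)\<^sup>2 * indicator (space M) x \<partial>M) \<le> (\<integral>x. (b i)\<^sup>2 \<partial>M)"
    proof (intro integral_mono integrable_real_mult_indicator integrable_sq_Z)
      show "(Z i x)\<^sup>2 * indicator (space M) x \<le> (b i)\<^sup>2" if "x \<in> space M" for x
        using power2_le_iff_abs_le[of "b i" "Z i x"] Z_bounded[OF that, of i] that by simp
    qed auto
    then show ?case
      using integral_sq_increment[OF space step(1)] step.IH step(1) by (simp add: prob_space)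
  qed simp
  then show ?thesis
    by (simp cong: Bochner_Integration.integral_cong)
qed

lemma measure_mult_sq_le_integral:
  assumes A: "A \<in> sets (F k)" and "m \<le> k" "k \<le> n" "\<epsilon> \<ge> 0"
    and deviation: "\<And>x. x \<in> A \<Longrightarrow> \<epsilon> \<le> \<bar>S k x - S m x\<bar>"
  shows "measure M A * \<epsilon>\<^sup>2 \<le> (\<integral>x. (S n x - S m x)\<^sup>2 * indicator A x \<partial>M)"
proof -
  have [measurable]: "A \<in> sets M"
    by (rule sets_F_M[OF A])
  have "measure M A * \<epsilon>\<^sup>2 = (\<integral>x. \<epsilon>\<^sup>2 * indicator A x \<partial>M)"
    by (simp add: sets.Int_space_eq2)
  also have "\<dots> \<le> (\<integral>x. (S k x - S m x)\<^sup>2 * indicator A x \<partial>M)"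
  proof (intro integral_mono integrable_real_mult_indicator integrable_sq_S_diff)
    show "\<epsilon>\<^sup>2 * indicator A x \<le> (S k x - S m x)\<^sup>2 * indicator A x" for x
      using abs_le_square_iff[of \<epsilon> "S k x - S m x"] deviation[of x] \<open>\<epsilon> \<ge> 0\<close>
      by (auto simp: indicator_def)
  qed (auto intro!: integrable_real_indicator simp: less_top[symmetric])
  also have "\<dots> \<le> (\<integral>x. (S n x - S m x)\<^sup>2 * indicator A x \<partial>M)"
    by (rule integral_sq_mono[OF A \<open>m \<le> k\<close> \<open>k \<le> n\<close>])
  finally show ?thesis .
qed

lemma kolmogorov_maximal_ineq:
  assumes "\<epsilon> > 0" "m \<le> n"
  shows "measure M {x\<in>space M. \<exists>k\<in>{m..n}. \<epsilon> \<le> \<bar>S k x - S m x\<bar>} * \<epsilon>\<^sup>2 \<le> (\<Sum>t\<in>{m..<n}. (b t)\<^sup>2)"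
proof -
  let ?E = "{x\<in>space M. \<exists>k\<in>{m..n}. \<epsilon> \<le> \<bar>S k x - S m x\<bar>}"
  define A where "A k = {x\<in>space M. \<epsilon> \<le> \<bar>S k x - S m x\<bar> \<and> (\<forall>j\<in>{m..<k}. \<not> \<epsilon> \<le> \<bar>S j x - S m x\<bar>)}"
    for k
  have A_sets: "A k \<in> sets (F k)" if "m \<le> k" for k
  proof -
    have "S j \<in> borel_measurable (F k)" if "j \<le> k" for j
      by (rule measurable_F_mono[OF S_measurable_F that])
    then have "Measurable.pred (F k) (\<lambda>x. \<epsilon> \<le> \<bar>S j x - S m x\<bar>)" if "j \<le> k" for j
      using that \<open>m \<le> k\<close> by measurable
    then have "Measurable.pred (F k) (\<lambda>x. \<epsilon> \<le> \<bar>S k x - S m x\<bar> \<and> (\<forall>j\<in>{m..<k}. \<not> \<epsilon> \<le> \<bar>S j x - S m x\<bar>))"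
      by (intro pred_intros_logic pred_intros_countable_bounded(3)) auto
    moreover have "space (F k) = space M"
      using subalgebra_F[of k] by (simp add: subalgebra_def)
    ultimately show ?thesis
      unfolding A_def pred_def by simp
  qed
  have A_M: "A k \<in> sets M" if "m \<le> k" for k
    by (rule sets_F_M[OF A_sets[OF that]])
  have indicator_E: "indicator ?E x = (\<Sum>k\<in>{m..n}. indicator (A k) x :: real)" for x
    unfolding A_def by (rule indicator_Bex_eq_sum_first)
  have "measure M ?E * \<epsilon>\<^sup>2 = (\<integral>x. (\<Sum>k\<in>{m..n}. \<epsilon>\<^sup>2 * indicator (A k) x) \<partial>M)"
    by (simp add: sets.Int_space_eq2 indicator_E[symmetric] sum_distrib_left[symmetric] Int_absorb2)
  also have "\<dots> = (\<Sum>k\<in>{m..n}. \<integral>x. \<epsilon>\<^sup>2 * indicator (A k) x \<partial>M)"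
    by (rule Bochner_Integration.integral_sum)
       (auto intro!: integrable_real_indicator A_M simp: less_top[symmetric])
  also have "\<dots> = (\<Sum>k\<in>{m..n}. measure M (A k) * \<epsilon>\<^sup>2)"
    by (intro sum.cong) (auto simp: A_M sets.Int_space_eq2)
  also have "\<dots> \<le> (\<Sum>k\<in>{m..n}. \<integral>x. (S n x - S m x)\<^sup>2 * indicator (A k) x \<partial>M)"
  proof (rule sum_mono)
    fix k assume "k \<in> {m..n}"
    with \<open>\<epsilon> > 0\<close> show "measure M (A k) * \<epsilon>\<^sup>2 \<le> (\<integral>x. (S n x - S m x)\<^sup>2 * indicator (A k) x \<partial>M)"
      by (intro measure_mult_sq_le_integral[OF A_sets]) (auto simp: A_def)
  qed
  also have "\<dots> = (\<integral>x. (S n x - S m x)\<^sup>2 * indicator ?E x \<partial>M)"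
    using A_M integrable_real_mult_indicator[OF _ integrable_sq_S_diff]
    by (subst Bochner_Integration.integral_sum[symmetric]) (auto simp: indicator_E sum_distrib_left)
  also have "\<dots> \<le> (\<integral>x. (S n x - S m x)\<^sup>2 \<partial>M)"
    by (intro integral_mono integrable_real_mult_indicator integrable_sq_S_diff)
       (auto simp: indicator_def)
  also have "\<dots> \<le> (\<Sum>t\<in>{m..<n}. (b t)\<^sup>2)"
    by (rule integral_sq_le[OF \<open>m \<le> n\<close>])
  finally show ?thesis .
qed

lemma tail_deviation_measure:
  assumes "\<epsilon> > 0" and summable: "summable (\<lambda>t. (b t)\<^sup>2)"
  shows "measure M {x\<in>space M. \<exists>k\<ge>m. \<epsilon> \<le> \<bar>S k x - S m x\<bar>} * \<epsilon>\<^sup>2 \<le> (\<Sum>t. (b t)\<^sup>2) - (\<Sum>t<m. (b t)\<^sup>2)"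
proof -
  define E where "E n = {x\<in>space M. \<exists>k\<in>{m..m+n}. \<epsilon> \<le> \<bar>S k x - S m x\<bar>}" for n
  have E_sets: "E n \<in> sets M" for n
  proof -
    have "Measurable.pred M (\<lambda>x. \<exists>k\<in>{m..m+n}. \<epsilon> \<le> \<bar>S k x - S m x\<bar>)"
      by measurable
    then show ?thesis
      unfolding E_def pred_def .
  qed
  have "incseq E"
  proof (rule incseq_SucI)
    show "E n \<subseteq> E (Suc n)" for n
      unfolding E_def by fastforce
  qed
  have E_le: "measure M (E n) * \<epsilon>\<^sup>2 \<le> (\<Sum>t. (b t)\<^sup>2) - (\<Sum>t<m. (b t)\<^sup>2)" for n
  proof -
    have "(\<Sum>t<m. (b t)\<^sup>2) + (\<Sum>t\<in>{m..<m+n}. (b t)\<^sup>2) = (\<Sum>t<m+n. (b t)\<^sup>2)"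
      by (metis le_add1 lessThan_atLeast0 sum.atLeastLessThan_concat zero_le)
    also have "\<dots> \<le> (\<Sum>t. (b t)\<^sup>2)"
      by (rule sum_le_suminf[OF summable]) auto
    finally show ?thesis
      using kolmogorov_maximal_ineq[OF \<open>\<epsilon> > 0\<close>, of m "m + n"] unfolding E_def by simp
  qed
  have "(\<lambda>n. measure M (E n) * \<epsilon>\<^sup>2) \<longlonglongrightarrow> measure M (\<Union>n. E n) * \<epsilon>\<^sup>2"
    using E_sets \<open>incseq E\<close> by (intro tendsto_mult_right finite_Lim_measure_incseq) auto
  then have "measure M (\<Union>n. E n) * \<epsilon>\<^sup>2 \<le> (\<Sum>t. (b t)\<^sup>2) - (\<Sum>t<m. (b t)\<^sup>2)"
    by (rule LIMSEQ_le_const2) (use E_le in auto)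
  moreover have "(\<Union>n. E n) = {x\<in>space M. \<exists>k\<ge>m. \<epsilon> \<le> \<bar>S k x - S m x\<bar>}"
  proof (intro equalityI subsetI)
    fix x assume "x \<in> {x\<in>space M. \<exists>k\<ge>m. \<epsilon> \<le> \<bar>S k x - S m x\<bar>}"
    then obtain k where "x \<in> space M" "k \<ge> m" "\<epsilon> \<le> \<bar>S k x - S m x\<bar>"
      by blast
    then have "x \<in> E (k - m)"
      unfolding E_def by auto
    then show "x \<in> (\<Union>n. E n)"
      by blast
  qed (auto simp: E_def)
  ultimately show ?thesis
    by simp
qed

lemma AE_eventually_small_deviation:
  assumes summable: "summable (\<lambda>t. (b t)\<^sup>2)" and "\<epsilon> > 0"
  shows "AE x in M. \<exists>m. \<forall>k\<ge>m. \<bar>S k x - S m x\<bar> < \<epsilon>"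
proof -
  let ?B = "{x\<in>space M. \<forall>m. \<exists>k\<ge>m. \<epsilon> \<le> \<bar>S k x - S m x\<bar>}"
  have B_sets: "?B \<in> sets M"
  proof -
    have "Measurable.pred M (\<lambda>x. \<forall>m. \<exists>k\<ge>m. \<epsilon> \<le> \<bar>S k x - S m x\<bar>)"
      by measurable
    then show ?thesis
      unfolding pred_def .
  qed
  have "measure M ?B \<le> ((\<Sum>t. (b t)\<^sup>2) - (\<Sum>t<m. (b t)\<^sup>2)) / \<epsilon>\<^sup>2" for m
  proof -
    have "Measurable.pred M (\<lambda>x. \<exists>k\<ge>m. \<epsilon> \<le> \<bar>S k x - S m x\<bar>)"
      by measurable
    then have "measure M ?B \<le> measure M {x\<in>space M. \<exists>k\<ge>m. \<epsilon> \<le> \<bar>S k x - S m x\<bar>}"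
      by (intro finite_measure_mono) (auto simp: pred_def)
    also have "\<dots> \<le> ((\<Sum>t. (b t)\<^sup>2) - (\<Sum>t<m. (b t)\<^sup>2)) / \<epsilon>\<^sup>2"
      using tail_deviation_measure[OF \<open>\<epsilon> > 0\<close> summable, of m] \<open>\<epsilon> > 0\<close> by (simp add: pos_le_divide_eq)
    finally show ?thesis .
  qed
  moreover have "(\<lambda>m. ((\<Sum>t. (b t)\<^sup>2) - (\<Sum>t<m. (b t)\<^sup>2)) / \<epsilon>\<^sup>2) \<longlonglongrightarrow> ((\<Sum>t. (b t)\<^sup>2) - (\<Sum>t. (b t)\<^sup>2)) / \<epsilon>\<^sup>2"
    using \<open>\<epsilon> > 0\<close> by (intro tendsto_intros summable_LIMSEQ summable) auto
  ultimately have "measure M ?B \<le> 0"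
    by (intro LIMSEQ_le_const) auto
  then have "AE x in M. x \<notin> ?B"
    using B_sets by (intro AE_not_in) (simp add: null_sets_def emeasure_eq_measure measure_le_0_iff)
  then show ?thesis
    using AE_space by eventually_elim (force simp: not_le)
qed

lemma AE_convergent_S:
  assumes "summable (\<lambda>t. (b t)\<^sup>2)"
  shows "AE x in M. convergent (\<lambda>n. S n x)"
proof -
  have "AE x in M. \<forall>j. \<exists>m. \<forall>k\<ge>m. \<bar>S k x - S m x\<bar> < 1 / real (Suc j)"
    using AE_eventually_small_deviation[OF assms] by (simp add: AE_all_countable)
  then show ?thesis
  proof (rule eventually_mono)
    fix x assume small: "\<forall>j. \<exists>m. \<forall>k\<ge>m. \<bar>S k x - S m x\<bar> < 1 / real (Suc j)"
    have "Cauchy (\<lambda>n. S n x)"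
    proof (rule CauchyI)
      fix e :: real assume "e > 0"
      then obtain j where j: "inverse (real (Suc j)) < e / 2"
        using reals_Archimedean[of "e / 2"] by auto
      obtain m where m: "\<And>k. k \<ge> m \<Longrightarrow> \<bar>S k x - S m x\<bar> < 1 / real (Suc j)"
        using small by blast
      have "norm (S k x - S k' x) < e" if "k \<ge> m" "k' \<ge> m" for k k'
        using m[OF that(1)] m[OF that(2)] j by (simp add: inverse_eq_divide)
      then show "\<exists>M. \<forall>k\<ge>M. \<forall>k'\<ge>M. norm (S k x - S k' x) < e"
        by blast
    qed
    then show "convergent (\<lambda>n. S n x)"
      by (simp add: Cauchy_convergent_iff)
  qed
qed

end

section \<open>Projected stochastic approximation\<close>

lemma space_hist_alg [simp]: "space (hist_alg M p t) = space M"
  unfolding hist_alg_def by (rule space_measure_of) auto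

lemma sets_hist_alg:
  "sets (hist_alg M p t) = sigma_sets (space M) (\<Union>s\<in>{1..t}. {p s -` B \<inter> space M | B. B \<in> sets borel})"
  unfolding hist_alg_def by (rule sets_measure_of) auto

lemma sets_hist_alg_mono: "t \<le> t' \<Longrightarrow> sets (hist_alg M p t) \<subseteq> sets (hist_alg M p t')"
  unfolding sets_hist_alg by (intro sigma_sets_mono' UN_mono) auto

lemma subalgebra_hist_alg:
  assumes "\<And>s. 1 \<le> s \<Longrightarrow> s \<le> t \<Longrightarrow> p s \<in> borel_measurable M"
  shows "subalgebra M (hist_alg M p t)"
  unfolding subalgebra_def sets_hist_alg
  using assms by (auto intro!: sets.sigma_sets_subset measurable_sets)

lemma measurable_hist_alg:
  assumes "1 \<le> s" "s \<le> t"
  shows "p s \<in> borel_measurable (hist_alg M p t)"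
proof (rule measurableI)
  fix B :: "real set" assume "B \<in> sets borel"
  with assms have "p s -` B \<inter> space M \<in> (\<Union>s\<in>{1..t}. {p s -` B \<inter> space M | B. B \<in> sets borel})"
    by (intro UN_I[of s]) auto
  then show "p s -` B \<inter> space (hist_alg M p t) \<in> sets (hist_alg M p t)"
    unfolding sets_hist_alg by (simp add: sigma_sets.Basic)
qed simp

locale projected_stochastic_approximation = prob_space M for M :: "'a measure" +
  fixes p v :: "nat \<Rightarrow> 'a \<Rightarrow> real" and kappa :: "nat \<Rightarrow> real" and f :: "real \<Rightarrow> real"
    and pmin Mb :: real
  assumes pmin_le_1: "pmin \<le> 1"
    and p1_measurable: "p 1 \<in> borel_measurable M"
    and p1_range: "\<And>x. x \<in> space M \<Longrightarrow> p 1 x \<in> {pmin..1}"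
    and v_measurable: "\<And>t. t \<ge> 1 \<Longrightarrow> v t \<in> borel_measurable M"
    and p_Suc: "\<And>t x. t \<ge> 1 \<Longrightarrow> x \<in> space M \<Longrightarrow> p (Suc t) x = max pmin (p t x + kappa t * v t x)"
    and v_bounded: "\<And>t x. t \<ge> 1 \<Longrightarrow> x \<in> space M \<Longrightarrow> \<bar>v t x\<bar> \<le> Mb"
    and v_le: "\<And>t x. t \<ge> 1 \<Longrightarrow> x \<in> space M \<Longrightarrow> v t x \<le> 1 - p t x"
    and cond_exp_v: "\<And>t. t \<ge> 1 \<Longrightarrow> AE x in M. real_cond_exp M (hist_alg M p t) (v t) x = f (p t x)"
    and kappa_range: "\<And>t. t \<ge> 1 \<Longrightarrow> kappa t \<in> {0<..1}"
    and kappa_divergent: "filterlim (\<lambda>n. \<Sum>t=1..n. kappa t) at_top sequentially"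
    and kappa_sq_summable: "summable (\<lambda>t. (kappa t)\<^sup>2)"
    and f_strict_antimono: "\<And>x y. x < y \<Longrightarrow> f y < f x"
begin

lemma kappa_pos: "t \<ge> 1 \<Longrightarrow> kappa t > 0"
  using kappa_range by auto

lemma kappa_tendsto_0: "kappa \<longlonglongrightarrow> 0"
proof -
  have "(\<lambda>t. sqrt ((kappa t)\<^sup>2)) \<longlonglongrightarrow> sqrt 0"
    by (intro tendsto_intros summable_LIMSEQ_zero[OF kappa_sq_summable])
  then show ?thesis
    by (simp add: tendsto_rabs_zero_iff)
qed

lemma Mb_nonneg: "Mb \<ge> 0"
proof -
  obtain x where "x \<in> space M"
    using not_empty by blast
  then show ?thesis
    using v_bounded[of 1 x] by simp
qed

lemma p_range: "t \<ge> 1 \<Longrightarrow> x \<in> space M \<Longrightarrow> pmin \<le> p t x \<and> p t x \<le> 1"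
proof (induction t rule: dec_induct)
  case (step t)
  \<comment> \<open>The constraint v t \<le> 1 - p t keeps a step of length kappa t \<le> 1 below 1.\<close>
  have "p t x + kappa t * v t x \<le> 1"
  proof (cases "v t x \<ge> 0")
    case True
    then have "kappa t * v t x \<le> v t x"
      using kappa_range[OF step(1)] by (simp add: mult_left_le_one_le)
    then show ?thesis
      using v_le[OF step(1) step.prems] by simp
  next
    case False
    then have "kappa t * v t x < 0"
      using kappa_pos[OF step(1)] by (simp add: mult_pos_neg)
    then show ?thesis
      using step.IH[OF step.prems] by simp
  qed
  then show ?case
    using p_Suc[OF step(1) step.prems] pmin_le_1 by simp
qed (use p1_range in auto)

lemma p_measurable: "t \<ge> 1 \<Longrightarrow> p t \<in> borel_measurable M"
proof (induction t rule: dec_induct)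
  case (step t)
  note [measurable] = step.IH v_measurable[OF step(1)]
  have "(\<lambda>x. max pmin (p t x + kappa t * v t x)) \<in> borel_measurable M"
    by measurable
  then show ?case
    using p_Suc[OF step(1)] by (subst measurable_cong) auto
qed (use p1_measurable in simp)

abbreviation H :: "nat \<Rightarrow> 'a measure" where
  "H t \<equiv> hist_alg M p t"

lemma subalgebra_H: "subalgebra M (H t)"
  by (rule subalgebra_hist_alg) (use p_measurable in auto)

lemma sigma_finite_subalgebra_H: "sigma_finite_subalgebra M (H t)"
  using subalgebra_H by (intro finite_measure_subalgebra_is_sigma_finite finite_measure_subalgebra.intro
      finite_measure_subalgebra_axioms.intro finite_measure_axioms)

lemma measurable_H_M: "g \<in> borel_measurable (H t) \<Longrightarrow> g \<in> borel_measurable M"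
  by (rule measurable_from_subalg[OF subalgebra_H])

lemma measurable_H_mono: "g \<in> borel_measurable (H t) \<Longrightarrow> t \<le> s \<Longrightarrow> g \<in> borel_measurable (H s)"
  by (rule measurable_from_subalg[of "H s" "H t"])
     (use subalgebra_H sets_hist_alg_mono[of t s M p] in \<open>auto simp: subalgebra_def\<close>)

definition step :: "nat \<Rightarrow> 'a \<Rightarrow> real" where
  "step t x = (p (Suc t) x - p t x) / kappa t"

lemma p_Suc_step: "t \<ge> 1 \<Longrightarrow> p (Suc t) x = p t x + kappa t * step t x"
  unfolding step_def using kappa_pos[of t] by simp

lemma step_measurable:
  assumes "t \<ge> 1"
  shows "step t \<in> borel_measurable (H (Suc t))"
proof -
  have [measurable]: "p (Suc t) \<in> borel_measurable (H (Suc t))" "p t \<in> borel_measurable (H (Suc t))"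
    using assms by (auto intro: measurable_hist_alg)
  show ?thesis
    unfolding step_def[abs_def] by measurable
qed

lemma step_bounds:
  assumes "t \<ge> 1" "x \<in> space M"
  shows abs_step_le: "\<bar>step t x\<bar> \<le> Mb"
    and v_le_step: "v t x \<le> step t x"
    and step_eq_v: "pmin + kappa t * Mb < p t x \<Longrightarrow> step t x = v t x"
proof -
  have k: "kappa t > 0"
    using kappa_pos[OF assms(1)] .
  have kv: "\<bar>kappa t * v t x\<bar> \<le> kappa t * Mb"
    using k v_bounded[OF assms] by (simp add: abs_mult)
  have p_Suc_x: "p (Suc t) x = max pmin (p t x + kappa t * v t x)"
    using p_Suc[OF assms] .
  have "\<bar>p (Suc t) x - p t x\<bar> \<le> kappa t * Mb"
    using p_Suc_x p_range[OF assms] kv by (auto simp: max_def abs_le_iff)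
  then show "\<bar>step t x\<bar> \<le> Mb"
    unfolding step_def using k by (simp add: abs_divide pos_divide_le_eq mult.commute)
  have "kappa t * v t x \<le> p (Suc t) x - p t x"
    using p_Suc_x by simp
  then show "v t x \<le> step t x"
    unfolding step_def using k by (simp add: pos_le_divide_eq mult.commute)
  assume "pmin + kappa t * Mb < p t x"
  then have "p (Suc t) x = p t x + kappa t * v t x"
    using p_Suc_x kv by (auto simp: max_def abs_le_iff)
  then show "step t x = v t x"
    unfolding step_def using k by simp
qed

lemma integrable_step: "t \<ge> 1 \<Longrightarrow> integrable M (step t)"
  by (rule integrable_bounded[OF measurable_H_M[OF step_measurable] abs_step_le])

lemma integrable_v: "t \<ge> 1 \<Longrightarrow> integrable M (v t)"
  by (rule integrable_bounded[OF v_measurable v_bounded])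

text \<open>A version of the conditional expectation of step clipped to [-Mb, Mb], so that its
  bounds hold everywhere rather than almost everywhere.\<close>
definition drift :: "nat \<Rightarrow> 'a \<Rightarrow> real" where
  "drift t x = max (- Mb) (min Mb (real_cond_exp M (H t) (step t) x))"

lemma drift_measurable: "drift t \<in> borel_measurable (H t)"
proof -
  have [measurable]: "real_cond_exp M (H t) (step t) \<in> borel_measurable (H t)"
    by (rule borel_measurable_cond_exp)
  show ?thesis
    unfolding drift_def[abs_def] by measurable
qed

lemma abs_drift_le: "\<bar>drift t x\<bar> \<le> Mb"
  unfolding drift_def using Mb_nonneg by auto

lemma AE_drift_eq_cond_exp:
  assumes "t \<ge> 1"
  shows "AE x in M. drift t x = real_cond_exp M (H t) (step t) x"
proof -
  have "AE x in M. real_cond_exp M (H t) (step t) x \<le> Mb"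
    by (intro sigma_finite_subalgebra.real_cond_exp_le_c[OF sigma_finite_subalgebra_H integrable_step[OF assms]])
       (auto intro!: AE_I2 dest!: abs_step_le[OF assms] simp: abs_le_iff)
  moreover have "AE x in M. real_cond_exp M (H t) (step t) x \<ge> - Mb"
    by (intro sigma_finite_subalgebra.real_cond_exp_ge_c[OF sigma_finite_subalgebra_H integrable_step[OF assms]])
       (auto intro!: AE_I2 dest!: abs_step_le[OF assms] simp: abs_le_iff)
  ultimately show ?thesis
    unfolding drift_def by eventually_elim auto
qed

lemma AE_drift_ge:
  assumes "t \<ge> 1"
  shows "AE x in M. f (p t x) \<le> drift t x"
proof -
  have "AE x in M. real_cond_exp M (H t) (v t) x \<le> real_cond_exp M (H t) (step t) x"
    using v_le_step[OF assms]
    by (intro sigma_finite_subalgebra.real_cond_exp_mono[OF sigma_finite_subalgebra_H _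
          integrable_v[OF assms] integrable_step[OF assms]]) auto
  then show ?thesis
    using cond_exp_v[OF assms] AE_drift_eq_cond_exp[OF assms] by eventually_elim auto
qed

lemma AE_drift_eq:
  assumes "t \<ge> 1"
  shows "AE x in M. pmin + kappa t * Mb < p t x \<longrightarrow> drift t x = f (p t x)"
proof -
  \<comment> \<open>Away from the boundary the projection is inactive, so step t = v t there,
    and the indicator of this H t-measurable event commutes with the conditional expectation.\<close>
  define h where "h x = (if pmin + kappa t * Mb < p t x then 1 else 0 :: real)" for x
  have h_measurable: "h \<in> borel_measurable (H t)"
  proof -
    have [measurable]: "p t \<in> borel_measurable (H t)"
      using assms by (auto intro: measurable_hist_alg)
    show ?thesis
      unfolding h_def[abs_def] by measurable
  qed
  note [measurable] = measurable_H_M[OF h_measurable] measurable_H_M[OF step_measurable[OF assms]]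
    v_measurable[OF assms]
  have "AE x in M. real_cond_exp M (H t) (\<lambda>x. h x * step t x) x = h x * real_cond_exp M (H t) (step t) x"
    using abs_step_le[OF assms] Mb_nonneg
    by (intro sigma_finite_subalgebra.real_cond_exp_mult[OF sigma_finite_subalgebra_H h_measurable]
        integrable_bounded[where B = Mb]) (measurable, auto simp: h_def)
  moreover have "AE x in M. real_cond_exp M (H t) (\<lambda>x. h x * v t x) x = h x * real_cond_exp M (H t) (v t) x"
    using v_bounded[OF assms] Mb_nonneg
    by (intro sigma_finite_subalgebra.real_cond_exp_mult[OF sigma_finite_subalgebra_H h_measurable]
        integrable_bounded[where B = Mb]) (measurable, auto simp: h_def)
  moreover have "AE x in M. real_cond_exp M (H t) (\<lambda>x. h x * step t x) x =
      real_cond_exp M (H t) (\<lambda>x. h x * v t x) x"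
  proof (rule sigma_finite_subalgebra.real_cond_exp_cong[OF sigma_finite_subalgebra_H])
    show "AE x in M. h x * step t x = h x * v t x"
      using step_eq_v[OF assms] by (auto intro!: AE_I2 simp: h_def)
  qed (measurable, measurable)
  ultimately show ?thesis
    using cond_exp_v[OF assms] AE_drift_eq_cond_exp[OF assms]
    by eventually_elim (auto simp: h_def split: if_splits)
qed

lemma integral_mult_drift:
  assumes "t \<ge> 1" and h: "h \<in> borel_measurable (H t)" "\<And>x. x \<in> space M \<Longrightarrow> \<bar>h x\<bar> \<le> K"
  shows "(\<integral>x. h x * drift t x \<partial>M) = (\<integral>x. h x * step t x \<partial>M)"
proof -
  note [measurable] = measurable_H_M[OF h(1)] measurable_H_M[OF step_measurable[OF assms(1)]]
    measurable_H_M[OF drift_measurable] measurable_H_M[OF borel_measurable_cond_exp]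
  have "integrable M (\<lambda>x. h x * step t x)"
  proof (rule integrable_bounded[where B = "K * Mb"])
    show "\<bar>h x * step t x\<bar> \<le> K * Mb" if "x \<in> space M" for x
      using mult_mono[OF h(2)[OF that] abs_step_le[OF assms(1) that]
          order_trans[OF abs_ge_zero h(2)[OF that]] abs_ge_zero]
      by (simp add: abs_mult)
  qed measurable
  then have "(\<integral>x. h x * real_cond_exp M (H t) (step t) x \<partial>M) = (\<integral>x. h x * step t x \<partial>M)"
    by (rule sigma_finite_subalgebra.real_cond_exp_intg(2)[OF sigma_finite_subalgebra_H _ h(1)]) simp
  moreover have "(\<integral>x. h x * drift t x \<partial>M) = (\<integral>x. h x * real_cond_exp M (H t) (step t) x \<partial>M)"
    using AE_drift_eq_cond_exp[OF assms(1)] by (intro integral_cong_AE) auto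
  ultimately show ?thesis
    by simp
qed

lemma noise_martingale_difference:
  "bounded_martingale_difference M (\<lambda>t. H (Suc t))
    (\<lambda>t x. kappa (Suc t) * (step (Suc t) x - drift (Suc t) x)) (\<lambda>t. kappa (Suc t) * (2 * Mb))"
proof unfold_locales
  fix t :: nat
  show "subalgebra M (H (Suc t))"
    by (rule subalgebra_H)
  show "sets (H (Suc t)) \<subseteq> sets (H (Suc s))" if "t \<le> s" for s
    using that by (intro sets_hist_alg_mono) simp
  have [measurable]: "step (Suc t) \<in> borel_measurable (H (Suc (Suc t)))"
    by (rule step_measurable) simp
  have [measurable]: "drift (Suc t) \<in> borel_measurable (H (Suc (Suc t)))"
    by (rule measurable_H_mono[OF drift_measurable]) simp
  show "(\<lambda>x. kappa (Suc t) * (step (Suc t) x - drift (Suc t) x)) \<in> borel_measurable (H (Suc (Suc t)))"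
    by measurable
  show "\<bar>kappa (Suc t) * (step (Suc t) x - drift (Suc t) x)\<bar> \<le> kappa (Suc t) * (2 * Mb)"
    if "x \<in> space M" for x
    using abs_step_le[OF _ that, of "Suc t"] abs_drift_le[of "Suc t" x] kappa_pos[of "Suc t"]
    by (simp add: abs_mult)
  show "(\<integral>x. h x * (kappa (Suc t) * (step (Suc t) x - drift (Suc t) x)) \<partial>M) = 0"
    if "h \<in> borel_measurable (H (Suc t))" "\<And>x. x \<in> space M \<Longrightarrow> \<bar>h x\<bar> \<le> K" for h K
  proof -
    have "integrable M (\<lambda>x. h x * step (Suc t) x)" "integrable M (\<lambda>x. h x * drift (Suc t) x)"
      using that abs_step_le[of "Suc t"] abs_drift_le[of "Suc t"] measurable_H_M[OF that(1)]
        measurable_H_M[OF step_measurable[of "Suc t"]] measurable_H_M[OF drift_measurable]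
      by (auto intro!: integrable_bounded[where B = "K * Mb"] mult_mono
          simp: abs_mult order_trans[OF abs_ge_zero that(2)])
    moreover have "(\<lambda>x. h x * (kappa (Suc t) * (step (Suc t) x - drift (Suc t) x))) =
        (\<lambda>x. kappa (Suc t) * (h x * step (Suc t) x - h x * drift (Suc t) x))"
      by (simp add: fun_eq_iff algebra_simps)
    ultimately show ?thesis
      using integral_mult_drift[of "Suc t" h K] that by simp
  qed
qed

lemma AE_convergent_noise: "AE x in M. convergent (\<lambda>n. \<Sum>t=1..n. kappa t * (step t x - drift t x))"
proof -
  interpret noise: bounded_martingale_difference M "\<lambda>t. H (Suc t)"
    "\<lambda>t x. kappa (Suc t) * (step (Suc t) x - drift (Suc t) x)" "\<lambda>t. kappa (Suc t) * (2 * Mb)"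
    by (rule noise_martingale_difference)
  have "summable (\<lambda>t. (2 * Mb)\<^sup>2 * (kappa (Suc t))\<^sup>2)"
    using summable_ignore_initial_segment[OF kappa_sq_summable, of 1] by (intro summable_mult) simp
  then have "AE x in M. convergent (\<lambda>n. noise.S n x)"
    by (intro noise.AE_convergent_S) (simp add: power_mult_distrib mult.commute)
  then show ?thesis
    by (simp add: noise.S_def sum.atLeast1_atMost_eq)
qed

theorem AE_tendsto_projected_root:
  assumes ps: "pmin \<le> ps" "f ps \<le> 0" "pmin < ps \<Longrightarrow> f ps = 0"
  shows "AE x in M. (\<lambda>t. p t x) \<longlonglongrightarrow> ps"
proof -
  have "AE x in M. \<forall>t\<ge>1. f (p t x) \<le> drift t x \<and> (pmin + kappa t * Mb < p t x \<longrightarrow> drift t x = f (p t x))"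
    using AE_drift_ge AE_drift_eq by (auto simp: AE_all_countable intro: AE_mp)
  then show ?thesis
    using AE_convergent_noise AE_space
  proof eventually_elim
    case (elim x)
    have path: "pmin \<le> p t x \<and> p t x \<le> 1"
      "p (Suc t) x = p t x + kappa t * (drift t x + (step t x - drift t x))"
      "\<bar>drift t x\<bar> \<le> Mb"
      "f (p t x) \<le> drift t x"
      "pmin + kappa t * Mb < p t x \<Longrightarrow> drift t x = f (p t x)"
      if "t \<ge> 1" for t
      using elim p_range[OF that] p_Suc_step[OF that] abs_drift_le that by auto
    show ?case
      by (rule projected_recursion_tendsto[where p = "\<lambda>t. p t x" and g = "\<lambda>t. drift t x"
            and z = "\<lambda>t. step t x - drift t x" and kap = kappa and f = f,
            OF kappa_pos kappa_tendsto_0 kappa_divergent path(1,2) elim(2) path(3-5) f_strict_antimono ps])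
  qed
qed

end

theorem theorem6:
  fixes M :: "'a measure"
    and N l :: nat
    and P :: "nat \<Rightarrow> real"
    and c rho1 rho2 pmin Mb :: real
    and p v :: "nat \<Rightarrow> 'a \<Rightarrow> real"
    and kappa :: "nat \<Rightarrow> real"
  assumes "prob_space M"
    and "l \<in> {1..N}"
    and "c > 0" and "rho1 > 0" and "rho2 > 0"
    and "pmin > 0" and "pmin < 1"
    and "\<And>k. k \<in> {1..N} - {l} \<Longrightarrow> P k \<in> {0..1}"
    and "p 1 \<in> borel_measurable M"
    and "\<And>x. x \<in> space M \<Longrightarrow> p 1 x \<in> {pmin..1}"
    and "\<And>t. t \<ge> 1 \<Longrightarrow> v t \<in> borel_measurable M"
    and "\<And>t x. t \<ge> 1 \<Longrightarrow> x \<in> space M \<Longrightarrow>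
           p (Suc t) x = max pmin (p t x + kappa t * v t x)"
    and "\<And>t x. t \<ge> 1 \<Longrightarrow> x \<in> space M \<Longrightarrow> \<bar>v t x\<bar> \<le> Mb"
    and "\<And>t x. t \<ge> 1 \<Longrightarrow> x \<in> space M \<Longrightarrow> v t x \<le> 1 - p t x"
    and "\<And>t. t \<ge> 1 \<Longrightarrow>
           AE x in M. real_cond_exp M (hist_alg M p t) (v t) x =
             exp (- (c * rho1) * p t x) - p t x * beta_coef rho2 N l P - p t x"
    and "\<And>t. t \<ge> 1 \<Longrightarrow> kappa t \<in> {0<..1}"
    and "filterlim (\<lambda>n. \<Sum>t=1..n. kappa t) at_top sequentially"
    and "summable (\<lambda>t. (kappa t)\<^sup>2)"
  shows "AE x in M. (\<lambda>t. p t x) \<longlonglongrightarrow> best_response c rho1 rho2 pmin N l P"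
proof -
  have "c * rho1 > 0"
    using assms(3,4) by simp
  have "beta_coef rho2 N l P \<ge> 0"
    using assms(8) by (rule beta_coef_nonneg)
  interpret projected_stochastic_approximation M p v kappa "marginal_util c rho1 rho2 N l P" pmin Mb
  proof (intro projected_stochastic_approximation.intro projected_stochastic_approximation_axioms.intro)
    show "AE x in M. real_cond_exp M (hist_alg M p t) (v t) x = marginal_util c rho1 rho2 N l P (p t x)"
      if "t \<ge> 1" for t
      using assms(15)[OF that] by (simp add: marginal_util_def)
    show "marginal_util c rho1 rho2 N l P y < marginal_util c rho1 rho2 N l P x" if "x < y" for x y
      by (rule marginal_util_strict_antimono[OF \<open>c * rho1 > 0\<close> \<open>beta_coef rho2 N l P \<ge> 0\<close> that])
  qed (use assms in auto)
  show ?thesis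
    using best_response_projected_root[OF \<open>c * rho1 > 0\<close> assms(8)] \<open>pmin < 1\<close>
    by (intro AE_tendsto_projected_root) auto
qed

end
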